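(* Let $Q$ be a Boolean CQ as below with query graph $G$, let $I$ be an instance, let $R\in E^i$ and $v\in u_R^{+,R}\cap v_R^{\oplus}$. Let $P$ be a directed path from $u_R$ to $v$ whose first edge is $e_R$ and whose remaining part is a directed path from $v_R$ to $v$ consisting only of consistent edges. If there exist $(a,b_1),(a,b_2)\in\Pi_{u_R,v}(P^f(I))$ with $b_1\ne b_2$, then for no frugal repair $r$ of $I$ for $Q$ is there a tuple $t\in Q^f(r)$ with $t[u_R]=a$.
   Context: $Q$ is a Boolean conjunctive query without self-joins with atoms $R(u,v)$, $u\neq v$ variables, first attribute the key; relations are of consistent or inconsistent type. Query graph $G$: vertices are variables, one edge $e_R=(u_R,v_R)$ per atom, $E^i$ the inconsistent edges. $x\to y$: directed path (possibly empty) with only consistent edges; $u^{\oplus}=\{v:u\to v\}$; $u^{+,R}$ is the set of vertices reachable from $u$ by a directed path in $G$ with the edge $e_R$ removed. For a path $P$ (a set of atoms of $Q$), $P^f(I)$ is the set of satisfying valuations of the variables of $P$ in $I$, and $\Pi_{u_R,v}$ projects onto the variables $u_R,v$. A repair is a maximal subset of $I$ satisfying all key constraints; $Q^f(r)$ is the set of satisfying valuations of $Q$ in $r$, with $t[x]$ the value of variable $x$; a repair $r$ is frugal if no repair $r'$ has $Q^f(r')\subsetneq Q^f(r)$. *)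

theory Defs
  imports Main
begin

text \<open>A query is described by a finite set of relation names Q (no self-joins, so atoms
are identified with relation names), together with the key variable ku R (= u_R), the
non-key variable kv R (= v_R) of the atom R(u_R, v_R), and a predicate cons telling
whether a relation is of consistent type. Facts are triples (R, a, b) standing for R(a,b),
the first attribute being the key.\<close>

type_synonym ('r, 'c) fact = "'r \<times> 'c \<times> 'c"

definition wf_query :: "'r set \<Rightarrow> ('r \<Rightarrow> 'v) \<Rightarrow> ('r \<Rightarrow> 'v) \<Rightarrow> bool" where
  "wf_query Q ku kv \<longleftrightarrow> finite Q \<and> (\<forall>R\<in>Q. ku R \<noteq> kv R)"

definition key_ok_rel :: "'r \<Rightarrow> ('r, 'c) fact set \<Rightarrow> bool" where
  "key_ok_rel R r \<longleftrightarrow> (\<forall>a b b'. (R, a, b) \<in> r \<and> (R, a, b') \<in> r \<longrightarrow> b = b')"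

definition key_ok :: "('r, 'c) fact set \<Rightarrow> bool" where
  "key_ok r \<longleftrightarrow> (\<forall>R. key_ok_rel R r)"

definition valid_instance :: "('r \<Rightarrow> bool) \<Rightarrow> ('r, 'c) fact set \<Rightarrow> bool" where
  "valid_instance cons I \<longleftrightarrow> finite I \<and> (\<forall>R. cons R \<longrightarrow> key_ok_rel R I)"

definition is_repair :: "('r, 'c) fact set \<Rightarrow> ('r, 'c) fact set \<Rightarrow> bool" where
  "is_repair I r \<longleftrightarrow> r \<subseteq> I \<and> key_ok r \<and>
     (\<forall>r'. r \<subseteq> r' \<and> r' \<subseteq> I \<and> key_ok r' \<longrightarrow> r' = r)"

definition vars :: "'r set \<Rightarrow> ('r \<Rightarrow> 'v) \<Rightarrow> ('r \<Rightarrow> 'v) \<Rightarrow> 'v set" where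
  "vars A ku kv = ku ` A \<union> kv ` A"

definition sat_vals :: "'r set \<Rightarrow> ('r \<Rightarrow> 'v) \<Rightarrow> ('r \<Rightarrow> 'v) \<Rightarrow> ('r, 'c) fact set \<Rightarrow> ('v \<Rightarrow> 'c) set" where
  "sat_vals A ku kv I = {t. (\<forall>S\<in>A. (S, t (ku S), t (kv S)) \<in> I) \<and>
                           (\<forall>x. x \<notin> vars A ku kv \<longrightarrow> t x = undefined)}"

definition proj2 :: "'v \<Rightarrow> 'v \<Rightarrow> ('v \<Rightarrow> 'c) set \<Rightarrow> ('c \<times> 'c) set" where
  "proj2 x y T = (\<lambda>t. (t x, t y)) ` T"

definition frugal_repair :: "'r set \<Rightarrow> ('r \<Rightarrow> 'v) \<Rightarrow> ('r \<Rightarrow> 'v) \<Rightarrow> ('r, 'c) fact set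
    \<Rightarrow> ('r, 'c) fact set \<Rightarrow> bool" where
  "frugal_repair Q ku kv I r \<longleftrightarrow> is_repair I r \<and>
     \<not> (\<exists>r'. is_repair I r' \<and> sat_vals Q ku kv r' \<subset> sat_vals Q ku kv r)"

definition edges :: "'r set \<Rightarrow> ('r \<Rightarrow> 'v) \<Rightarrow> ('r \<Rightarrow> 'v) \<Rightarrow> ('v \<times> 'v) set" where
  "edges A ku kv = (\<lambda>S. (ku S, kv S)) ` A"

definition cons_reach :: "'r set \<Rightarrow> ('r \<Rightarrow> 'v) \<Rightarrow> ('r \<Rightarrow> 'v) \<Rightarrow> ('r \<Rightarrow> bool) \<Rightarrow> 'v \<Rightarrow> 'v \<Rightarrow> bool" where
  "cons_reach Q ku kv cons x y \<longleftrightarrow> (x, y) \<in> (edges {S\<in>Q. cons S} ku kv)\<^sup>*"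

definition reach_without :: "'r set \<Rightarrow> ('r \<Rightarrow> 'v) \<Rightarrow> ('r \<Rightarrow> 'v) \<Rightarrow> 'r \<Rightarrow> 'v \<Rightarrow> 'v set" where
  "reach_without Q ku kv R x = {y. (x, y) \<in> (edges (Q - {R}) ku kv)\<^sup>*}"

definition is_dpath :: "'r set \<Rightarrow> ('r \<Rightarrow> 'v) \<Rightarrow> ('r \<Rightarrow> 'v) \<Rightarrow> 'r list \<Rightarrow> 'v \<Rightarrow> 'v \<Rightarrow> bool" where
  "is_dpath Q ku kv Ps x y \<longleftrightarrow> Ps \<noteq> [] \<and> set Ps \<subseteq> Q \<and> distinct Ps \<and>
     ku (hd Ps) = x \<and> kv (last Ps) = y \<and>
     (\<forall>i. Suc i < length Ps \<longrightarrow> kv (Ps ! i) = ku (Ps ! Suc i))"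

end

theory Submission
  imports Defs
begin

text \<open>Suppose a frugal repair r had a valuation t with t(u_R) = a, and take a witness s of P
with s(u_R) = a but s(v) \<noteq> t(v). Replacing the R-block of key a in r by the single fact
R(a, s(v_R)) gives another repair r'. A valuation of Q in r' with u_R = a agrees with t on
u_R^{+,R}, since all facts used there lie in r and keys determine the values; and it agrees
with s along P, since consistent relations satisfy their keys already in I. So it cannot
exist, whence Q^f(r') is Q^f(r) minus the valuations with u_R = a, contradicting frugality.\<close>

definition replace_block :: "'r \<Rightarrow> 'c \<Rightarrow> 'c \<Rightarrow> ('r, 'c) fact set \<Rightarrow> ('r, 'c) fact set" where
  "replace_block R a c r = {f \<in> r. \<not> (fst f = R \<and> fst (snd f) = a)} \<union> {(R, a, c)}"

lemma replace_block_other: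
  "(S, x, y) \<in> replace_block R a c r \<Longrightarrow> S \<noteq> R \<Longrightarrow> (S, x, y) \<in> r"
  unfolding replace_block_def by auto

lemma replace_block_key:
  "(R, a, y) \<in> replace_block R a c r \<Longrightarrow> y = c"
  unfolding replace_block_def by auto

lemma replace_block_subset:
  "r \<subseteq> I \<Longrightarrow> (R, a, c) \<in> I \<Longrightarrow> replace_block R a c r \<subseteq> I"
  unfolding replace_block_def by auto

lemma key_ok_replace_block:
  "key_ok r \<Longrightarrow> key_ok (replace_block R a c r)"
  unfolding key_ok_def key_ok_rel_def replace_block_def by auto

lemma is_repair_replace_block:
  assumes rep: "is_repair I r" and old: "(R, a, c) \<in> r" and new: "(R, a, c') \<in> I"
  shows "is_repair I (replace_block R a c' r)"
  unfolding is_repair_def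
proof (intro conjI allI impI)
  have rI: "r \<subseteq> I" and kr: "key_ok r"
    and maxr: "\<And>r'. r \<subseteq> r' \<Longrightarrow> r' \<subseteq> I \<Longrightarrow> key_ok r' \<Longrightarrow> r' = r"
    using rep unfolding is_repair_def by auto
  show "replace_block R a c' r \<subseteq> I" using replace_block_subset[OF rI new] .
  show "key_ok (replace_block R a c' r)" using key_ok_replace_block[OF kr] .
  fix r'' assume r'': "replace_block R a c' r \<subseteq> r'' \<and> r'' \<subseteq> I \<and> key_ok r''"
  have new'': "(R, a, c') \<in> r''" using r'' unfolding replace_block_def by auto
  have key'': "(R, a, y) \<in> r'' \<Longrightarrow> y = c'" for y
    using r'' new'' unfolding key_ok_def key_ok_rel_def by blast
  \<comment> \<open>Swapping the block back yields an extension of r, hence r itself.\<close>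
  define r3 where "r3 = (r'' - {(R, a, c')}) \<union> {(R, a, c)}"
  have "r \<subseteq> r3"
  proof
    fix f assume f: "f \<in> r"
    show "f \<in> r3"
    proof (cases "fst f = R \<and> fst (snd f) = a")
      case True
      then obtain y where "f = (R, a, y)" by (cases f) auto
      with f old kr show ?thesis unfolding r3_def key_ok_def key_ok_rel_def by blast
    next
      case False
      with f r'' show ?thesis unfolding r3_def replace_block_def by auto
    qed
  qed
  moreover have "r3 \<subseteq> I" using r'' rI old unfolding r3_def by auto
  moreover have "key_ok r3"
    using r'' key'' unfolding r3_def key_ok_def key_ok_rel_def by auto
  ultimately have "r3 = r" using maxr by blast
  then show "r'' = replace_block R a c' r"
    using r'' key'' unfolding r3_def replace_block_def by fastforce
qed

lemma rtrancl_edges_valuation_eq: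
  assumes "(x, y) \<in> (edges A ku kv)\<^sup>*"
    and keys: "\<forall>S\<in>A. key_ok_rel S J"
    and t: "\<forall>S\<in>A. (S, t (ku S), t (kv S)) \<in> J"
    and t': "\<forall>S\<in>A. (S, t' (ku S), t' (kv S)) \<in> J"
    and "t x = t' x"
  shows "t y = t' y"
  using assms(1)
proof (induction rule: rtrancl_induct)
  case base
  show ?case by fact
next
  case (step y z)
  then obtain S where "S \<in> A" "y = ku S" "z = kv S" unfolding edges_def by auto
  with step.IH keys t t' show ?case unfolding key_ok_rel_def by metis
qed

lemma is_dpath_tl_rtrancl:
  assumes "is_dpath Q ku kv Ps x y"
  shows "(kv (hd Ps), y) \<in> (edges (set (tl Ps)) ku kv)\<^sup>*"
proof -
  have ne: "Ps \<noteq> []" and last: "kv (last Ps) = y"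
    and chain: "\<And>i. Suc i < length Ps \<Longrightarrow> kv (Ps ! i) = ku (Ps ! Suc i)"
    using assms unfolding is_dpath_def by auto
  have "(kv (hd Ps), kv (Ps ! i)) \<in> (edges (set (tl Ps)) ku kv)\<^sup>*" if "i < length Ps" for i
    using that
  proof (induction i)
    case 0
    show ?case using ne by (simp add: hd_conv_nth)
  next
    case (Suc i)
    have "Ps ! Suc i \<in> set (tl Ps)" using Suc.prems ne by (simp add: nth_tl[symmetric])
    then have "(kv (Ps ! i), kv (Ps ! Suc i)) \<in> edges (set (tl Ps)) ku kv"
      using chain[OF Suc.prems] unfolding edges_def by force
    with Suc show ?case by simp
  qed
  from this[of "length Ps - 1"] show ?thesis using ne last by (simp add: last_conv_nth)
qed

lemma is_dpath_consistent_tail_determines_end: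
  assumes vi: "valid_instance cons I"
    and dp: "is_dpath Q ku kv Ps x y"
    and cons: "\<forall>S\<in>set (tl Ps). cons S"
    and s: "s \<in> sat_vals (set Ps) ku kv I"
    and t: "\<forall>S\<in>set Ps. (S, t (ku S), t (kv S)) \<in> I"
    and start: "t (kv (hd Ps)) = s (kv (hd Ps))"
  shows "t y = s y"
proof (rule rtrancl_edges_valuation_eq[OF is_dpath_tl_rtrancl[OF dp]])
  have tl_Ps: "set (tl Ps) \<subseteq> set Ps" by (cases Ps) auto
  show "\<forall>S\<in>set (tl Ps). key_ok_rel S I" using vi cons unfolding valid_instance_def by blast
  show "\<forall>S\<in>set (tl Ps). (S, t (ku S), t (kv S)) \<in> I" using t tl_Ps by blast
  show "\<forall>S\<in>set (tl Ps). (S, s (ku S), s (kv S)) \<in> I"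
    using s tl_Ps unfolding sat_vals_def by blast
qed fact

lemma sat_vals_replace_block_agree_off_edge:
  assumes kr: "key_ok r"
    and t: "t \<in> sat_vals Q ku kv r"
    and t': "t' \<in> sat_vals Q ku kv (replace_block R a c r)"
    and "t' (ku R) = t (ku R)"
    and "y \<in> reach_without Q ku kv R (ku R)"
  shows "t' y = t y"
proof (rule rtrancl_edges_valuation_eq[where A = "Q - {R}" and J = r and x = "ku R"])
  show "(ku R, y) \<in> (edges (Q - {R}) ku kv)\<^sup>*" using assms(5) unfolding reach_without_def by simp
  show "\<forall>S\<in>Q - {R}. key_ok_rel S r" using kr unfolding key_ok_def by simp
  show "\<forall>S\<in>Q - {R}. (S, t' (ku S), t' (kv S)) \<in> r"
    using t' replace_block_other unfolding sat_vals_def by fastforce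
  show "\<forall>S\<in>Q - {R}. (S, t (ku S), t (kv S)) \<in> r" using t unfolding sat_vals_def by simp
qed fact

lemma frugal_repair_replace_block_sat:
  assumes fr: "frugal_repair Q ku kv I r"
    and t: "t \<in> sat_vals Q ku kv r" and ta: "t (ku R) = a"
    and RQ: "R \<in> Q" and new: "(R, a, c) \<in> I"
  obtains t' where "t' \<in> sat_vals Q ku kv (replace_block R a c r)" "t' (ku R) = a"
proof (rule ccontr)
  let ?r' = "replace_block R a c r"
  assume none: "\<not> thesis"
  have rep: "is_repair I r"
    and minimal: "\<not> (\<exists>r'. is_repair I r' \<and> sat_vals Q ku kv r' \<subset> sat_vals Q ku kv r)"
    using fr unfolding frugal_repair_def by auto
  have "(R, a, t (kv R)) \<in> r" using t ta RQ unfolding sat_vals_def by force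
  then have rep': "is_repair I ?r'" using is_repair_replace_block[OF rep _ new] by blast
  have "sat_vals Q ku kv ?r' \<subseteq> sat_vals Q ku kv r"
  proof
    fix t' assume t': "t' \<in> sat_vals Q ku kv ?r'"
    then have "t' (ku R) \<noteq> a" using none that by blast
    \<comment> \<open>The only new fact R(a, c) has key a, so t' uses facts of r only.\<close>
    then have "\<forall>S\<in>Q. (S, t' (ku S), t' (kv S)) \<in> r"
      using t' unfolding sat_vals_def replace_block_def by auto
    then show "t' \<in> sat_vals Q ku kv r" using t' unfolding sat_vals_def by simp
  qed
  moreover have "t \<notin> sat_vals Q ku kv ?r'" using none that ta by blast
  ultimately show False using minimal rep' t by blast
qed

theorem lemma5p8:
  fixes Q :: "'r set" and ku kv :: "'r \<Rightarrow> 'v" and cons :: "'r \<Rightarrow> bool"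
    and I :: "('r, 'c) fact set" and R :: 'r and v :: 'v and Ps :: "'r list"
    and a b1 b2 :: 'c
  assumes "wf_query Q ku kv"
    and "valid_instance cons I"
    and "R \<in> Q" and "\<not> cons R"
    and "v \<in> reach_without Q ku kv R (ku R)"
    and "cons_reach Q ku kv cons (kv R) v"
    and "is_dpath Q ku kv Ps (ku R) v"
    and "hd Ps = R"
    and "\<forall>S\<in>set (tl Ps). cons S"
    and "(a, b1) \<in> proj2 (ku R) v (sat_vals (set Ps) ku kv I)"
    and "(a, b2) \<in> proj2 (ku R) v (sat_vals (set Ps) ku kv I)"
    and "b1 \<noteq> b2"
  shows "\<not> (\<exists>r. frugal_repair Q ku kv I r \<and> (\<exists>t\<in>sat_vals Q ku kv r. t (ku R) = a))"
proof
  assume "\<exists>r. frugal_repair Q ku kv I r \<and> (\<exists>t\<in>sat_vals Q ku kv r. t (ku R) = a)"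
  then obtain r t where fr: "frugal_repair Q ku kv I r" and t: "t \<in> sat_vals Q ku kv r"
    and ta: "t (ku R) = a" by blast
  obtain s where s: "s \<in> sat_vals (set Ps) ku kv I" "s (ku R) = a" "s v \<noteq> t v"
    using assms(10-12) unfolding proj2_def by (cases "b1 = t v") auto
  have PsQ: "set Ps \<subseteq> Q" and R_Ps: "R \<in> set Ps"
    using assms(7,8) unfolding is_dpath_def by (auto intro: list.set_sel(1))
  have new: "(R, a, s (kv R)) \<in> I" using s(1,2) R_Ps unfolding sat_vals_def by force
  obtain t' where t': "t' \<in> sat_vals Q ku kv (replace_block R a (s (kv R)) r)" "t' (ku R) = a"
    using frugal_repair_replace_block_sat[OF fr t ta assms(3) new] .
  have rI: "r \<subseteq> I" and kr: "key_ok r" using fr unfolding frugal_repair_def is_repair_def by auto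
  have t'I: "\<forall>S\<in>Q. (S, t' (ku S), t' (kv S)) \<in> I"
    using t'(1) replace_block_subset[OF rI new] unfolding sat_vals_def by blast
  have "t' v = t v"
    using sat_vals_replace_block_agree_off_edge[OF kr t t'(1) _ assms(5)] t'(2) ta by simp
  moreover have "t' (kv R) = s (kv R)"
    using t' assms(3) replace_block_key unfolding sat_vals_def by fastforce
  then have "t' v = s v"
    using is_dpath_consistent_tail_determines_end[OF assms(2,7,9) s(1)] t'I PsQ assms(8) by auto
  ultimately show False using s(3) by simp
qed

end
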